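(* Let $\mathcal{M}\subseteq\binom{[n]}{k}$ be a positroid with Grassmann necklace $(I_1,\dots,I_n)$ and decorated permutation $\pi^{:}=(\pi,col)$, and let $j\in[n]$ with $\pi(j)\ne j$. Let $\mathcal{M}':=\{H\in\mathcal{M}: j\in H\}$ and for each $a\in[n]$ let $K_a$ be the $\le_a$-minimal element of $\mathcal{M}'$ (in Gale order). Then for every $a\in[n]$: if $j\in I_a$ then $K_a=I_a$, and if $j\notin I_a$ then $$K_a=\bigl(I_a\setminus\{\max_a(I_a\setminus I_j)\}\bigr)\cup\{j\}.$$
   Context: Indices are taken modulo $n$; we identify $[n]$ with $\mathbb{Z}_n$. For $t\in[n]$, the total order $\le_t$ on $[n]$ is $t<_t t+1<_t\cdots<_t n<_t 1<_t\cdots<_t t-1$. For $A,B\in\binom{[n]}{k}$ with $A=\{i_1<_t\cdots<_t i_k\}$ and $B=\{j_1<_t\cdots<_t j_k\}$, write $A\le_t B$ (Gale order) iff $i_s\le_t j_s$ for all $s$. For $D\subseteq[n]$, $\max_a(D)$ is the largest element of $D$ in $\le_a$. A Grassmann necklace is a sequence $(I_1,\dots,I_n)$ of subsets of $[n]$ such that for each $i$: if $i\in I_i$ then $I_{i+1}=(I_i\setminus\{i\})\cup\{j'\}$ for some $j'\in[n]$, and if $i\notin I_i$ then $I_{i+1}=I_i$. A positroid is a set $\mathcal{M}\subseteq\binom{[n]}{k}$ for which there is a Grassmann necklace $(I_1,\dots,I_n)$ with $\mathcal{M}=\{H : H\ge_t I_t \text{ for all } t\in[n]\}$; then $I_t$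 is the $\le_t$-minimum of $\mathcal{M}$ and $(I_1,\dots,I_n)$ is called the Grassmann necklace of $\mathcal{M}$. A decorated permutation is a pair $(\pi,col)$ with $\pi\in S_n$ and $col$ a function from the fixed points of $\pi$ to $\{1,-1\}$. The necklace and decorated permutation correspond bijectively via: if $I_{i+1}=(I_i\setminus\{i\})\cup\{j'\}$ with $j'\ne i$ then $\pi(i)=j'$; if $I_{i+1}=I_i$ and $i\notin I_i$ then $\pi(i)=i$, $col(i)=1$; if $I_{i+1}=I_i$ and $i\in I_i$ then $\pi(i)=i$, $col(i)=-1$. Conversely $I_r=\{i\in[n] : i<_r\pi^{-1}(i)\text{ or }(\pi(i)=i\text{ and }col(i)=-1)\}$. *)

theory Defs
  imports Main
begin

text \<open>We work with [n] = {1..n} (natural numbers), indices taken cyclically.\<close>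

definition cnext :: "nat \<Rightarrow> nat \<Rightarrow> nat" where
  "cnext n i = (if i = n then 1 else i + 1)"

text \<open>Position of x in the cyclic order \<le>_t : t has rank 0, t+1 rank 1, ..., t-1 rank n-1.\<close>
definition crank :: "nat \<Rightarrow> nat \<Rightarrow> nat \<Rightarrow> nat" where
  "crank n t x = (x + n - t) mod n"

definition cle :: "nat \<Rightarrow> nat \<Rightarrow> nat \<Rightarrow> nat \<Rightarrow> bool" where
  "cle n t x y \<longleftrightarrow> crank n t x \<le> crank n t y"

definition csorted :: "nat \<Rightarrow> nat \<Rightarrow> nat set \<Rightarrow> nat list" where
  "csorted n t A = sort_key (crank n t) (sorted_list_of_set A)"

definition gale :: "nat \<Rightarrow> nat \<Rightarrow> nat set \<Rightarrow> nat set \<Rightarrow> bool" where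
  "gale n t A B \<longleftrightarrow>
     (let LA = csorted n t A; LB = csorted n t B in
       length LA = length LB \<and> (\<forall>s < length LA. cle n t (LA ! s) (LB ! s)))"

definition cmax :: "nat \<Rightarrow> nat \<Rightarrow> nat set \<Rightarrow> nat" where
  "cmax n a D = (THE x. x \<in> D \<and> (\<forall>y\<in>D. cle n a y x))"

definition ksubsets :: "nat \<Rightarrow> nat \<Rightarrow> nat set set" where
  "ksubsets n k = {H. H \<subseteq> {1..n} \<and> card H = k}"

definition grassmann_necklace :: "nat \<Rightarrow> (nat \<Rightarrow> nat set) \<Rightarrow> bool" where
  "grassmann_necklace n I \<longleftrightarrow>
     (\<forall>i\<in>{1..n}. I i \<subseteq> {1..n}) \<and>
     (\<forall>i\<in>{1..n}.
        (i \<in> I i \<longrightarrow> (\<exists>j'\<in>{1..n}. I (cnext n i) = (I i - {i}) \<union> {j'})) \<and>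
        (i \<notin> I i \<longrightarrow> I (cnext n i) = I i))"

definition positroid_with_necklace ::
    "nat \<Rightarrow> nat \<Rightarrow> nat set set \<Rightarrow> (nat \<Rightarrow> nat set) \<Rightarrow> bool" where
  "positroid_with_necklace n k M I \<longleftrightarrow>
     M \<subseteq> ksubsets n k \<and> grassmann_necklace n I \<and>
     M = {H \<in> ksubsets n k. \<forall>t\<in>{1..n}. gale n t (I t) H} \<and>
     (\<forall>t\<in>{1..n}. I t \<in> M \<and> (\<forall>H\<in>M. gale n t (I t) H))"

text \<open>The permutation part of the decorated permutation of the necklace I.\<close>
definition neck_perm :: "nat \<Rightarrow> (nat \<Rightarrow> nat set) \<Rightarrow> nat \<Rightarrow> nat" where
  "neck_perm n I i =
     (if i \<in> I i \<and> (\<exists>j'. j' \<noteq> i \<and> I (cnext n i) = (I i - {i}) \<union> {j'})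
      then (THE j'. j' \<noteq> i \<and> I (cnext n i) = (I i - {i}) \<union> {j'})
      else i)"

definition gale_min :: "nat \<Rightarrow> nat \<Rightarrow> nat set set \<Rightarrow> nat set \<Rightarrow> bool" where
  "gale_min n a F K \<longleftrightarrow> K \<in> F \<and> (\<forall>H\<in>F. gale n a K H)"

end

theory Submission
  imports Defs
begin

(*
  Fix j with pi(j) ~= j, so j \<in> I_j, and a with
  j \<notin> I_a.  Put m = max_a(I_a - I_j) and K = I_a - {m} + {j}.  The proof rests on two facts:
  (F1) every element of I_a above m in <=_a lies in I_j (maximality of m), and
  (F2) m <_a j, because walking the necklace from a to j, m can only leave at step m.
  Gale order is handled through prefix counts: A <=_t B iff |A| = |B| and every initial
  segment of <=_t contains at least as many elements of A as of B (lemma gale_iff).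
  With this, K \<in> M follows by comparing prefix counts of K with those of every I_t
  (lemma exchange_prefix_upper, which walks the necklace), and K <=_a H for every H \<in> M
  containing j follows by comparing with I_a and I_j (lemma exchange_prefix_lower).
*)

section \<open>Cyclic ranks\<close>

lemma cnext_in: "x \<in> {1..n} \<Longrightarrow> cnext n x \<in> {1..n}"
  by (auto simp: cnext_def)

lemma crank_eq:
  assumes "u \<in> {1..n}" "x \<in> {1..n}"
  shows "crank n u x = (if u \<le> x then x - u else x + n - u)"
proof (cases "u \<le> x")
  case True
  then have "x + n - u = (x - u) + n" using assms by auto
  then have "crank n u x = (x - u) mod n" by (simp add: crank_def)
  also have "\<dots> = x - u" using True assms by (intro mod_less) auto
  finally show ?thesis using True by simp
next
  case False
  then show ?thesis using assms by (simp add: crank_def)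
qed

lemma crank_lt: "1 \<le> n \<Longrightarrow> crank n u x < n"
  by (simp add: crank_def)

lemma crank_inj:
  assumes "u \<in> {1..n}" "x \<in> {1..n}" "y \<in> {1..n}" "crank n u x = crank n u y"
  shows "x = y"
  using assms crank_eq[OF assms(1) assms(2)] crank_eq[OF assms(1) assms(3)]
  by (auto split: if_splits)

lemma crank_shift:
  assumes "u \<in> {1..n}" "v \<in> {1..n}" "x \<in> {1..n}"
  shows "crank n v x = (if crank n u v \<le> crank n u x then crank n u x - crank n u v
                          else crank n u x + n - crank n u v)"
proof -
  note e = crank_eq[OF assms(1) assms(2)] crank_eq[OF assms(1) assms(3)] crank_eq[OF assms(2) assms(3)]
  have b: "1 \<le> u" "u \<le> n" "1 \<le> v" "v \<le> n" "1 \<le> x" "x \<le> n" using assms by auto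
  show ?thesis
    using b by (cases "u \<le> v"; cases "u \<le> x"; cases "v \<le> x";
                simp add: e not_le le_diff_conv2 le_diff_conv; linarith)
qed

lemma crank_window_as_suffix:
  assumes a: "a \<in> {1..n}" and j: "j \<in> {1..n}" and x: "x \<in> {1..n}"
  shows "(r \<le> crank n a x \<and> crank n a x < crank n a j) \<longleftrightarrow> n + r - crank n a j \<le> crank n j x"
proof -
  have "1 \<le> n" using a by simp
  then have "crank n a x < n" "crank n a j < n" using crank_lt by auto
  then show ?thesis using crank_shift[OF a j x] by auto
qed

lemma crank_cnext:
  assumes "u \<in> {1..n}" "x \<in> {1..n}"
  shows "crank n u (cnext n x) = (if crank n u x = n - 1 then 0 else crank n u x + 1)"
  using assms crank_eq[OF assms(1) assms(2)] crank_eq[OF assms(1) cnext_in[OF assms(2)]]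
  by (auto simp: cnext_def split: if_splits)

lemma cnext_iter_in: "u \<in> {1..n} \<Longrightarrow> (cnext n ^^ i) u \<in> {1..n}"
proof (induction i)
  case (Suc i)
  then show ?case using cnext_in by (metis comp_apply funpow.simps(2))
qed simp

lemma crank_cnext_iter: "u \<in> {1..n} \<Longrightarrow> i < n \<Longrightarrow> crank n u ((cnext n ^^ i) u) = i"
proof (induction i)
  case 0
  then show ?case by (simp add: crank_def)
next
  case (Suc i)
  then show ?case using crank_cnext[OF Suc.prems(1) cnext_iter_in[OF Suc.prems(1), of i]] by simp
qed

lemma cnext_iter_crank:
  assumes "u \<in> {1..n}" "x \<in> {1..n}"
  shows "(cnext n ^^ crank n u x) u = x"
proof -
  have "1 \<le> n" using assms by auto
  then have "crank n u ((cnext n ^^ crank n u x) u) = crank n u x"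
    using crank_cnext_iter[OF assms(1) crank_lt] by simp
  then show ?thesis using crank_inj[OF assms(1) cnext_iter_in[OF assms(1)] assms(2)] by blast
qed

section \<open>Gale order via prefix counts\<close>

lemma card_filter_nth:
  assumes "distinct L"
  shows "card {x \<in> set L. P x} = card {s. s < length L \<and> P (L ! s)}"
proof -
  have "{x \<in> set L. P x} = (nth L) ` {s. s < length L \<and> P (L!s)}"
    by (auto simp: in_set_conv_nth)
  moreover have "inj_on (nth L) {s. s < length L \<and> P (L!s)}"
    using assms by (simp add: inj_on_def nth_eq_iff_index_eq)
  ultimately show ?thesis by (simp add: card_image)
qed

lemma csorted_props:
  assumes "finite A"
  shows "set (csorted n t A) = A" "distinct (csorted n t A)"
    "sorted (map (crank n t) (csorted n t A))" "length (csorted n t A) = card A"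
  using assms by (auto simp: csorted_def sorted_sort_key)

lemma sorted_map_mono:
  assumes "sorted (map f L)" "i \<le> j" "j < length L"
  shows "f (L ! i) \<le> f (L ! j)"
  using sorted_nth_mono[OF assms(1), of i j] assms by simp

lemma sorted_entrywise_iff_counts:
  fixes f :: "'a \<Rightarrow> nat"
  assumes sA: "sorted (map f LA)" and sB: "sorted (map f LB)" and l: "length LA = length LB"
  shows "(\<forall>s < length LA. f (LA!s) \<le> f (LB!s)) \<longleftrightarrow>
         (\<forall>r. card {s. s < length LB \<and> f (LB!s) < r} \<le> card {s. s < length LA \<and> f (LA!s) < r})"
proof
  assume le: "\<forall>s < length LA. f (LA!s) \<le> f (LB!s)"
  show "\<forall>r. card {s. s < length LB \<and> f (LB!s) < r} \<le> card {s. s < length LA \<and> f (LA!s) < r}"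
  proof
    fix r
    have "{s. s < length LB \<and> f (LB!s) < r} \<subseteq> {s. s < length LA \<and> f (LA!s) < r}"
      using l le by fastforce
    then show "card {s. s < length LB \<and> f (LB!s) < r} \<le> card {s. s < length LA \<and> f (LA!s) < r}"
      by (intro card_mono) auto
  qed
next
  assume cnt: "\<forall>r. card {s. s < length LB \<and> f (LB!s) < r} \<le> card {s. s < length LA \<and> f (LA!s) < r}"
  show "\<forall>s < length LA. f (LA!s) \<le> f (LB!s)"
  proof (intro allI impI, rule ccontr)
    fix s assume s: "s < length LA" and c: "\<not> f (LA!s) \<le> f (LB!s)"
    define r where "r = Suc (f (LB!s))"
    have "{..s} \<subseteq> {s'. s' < length LB \<and> f (LB!s') < r}"
      using sorted_map_mono[OF sB] s l unfolding r_def by (auto simp: le_imp_less_Suc)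
    then have "Suc s \<le> card {s'. s' < length LB \<and> f (LB!s') < r}"
      using card_mono[of "{s'. s' < length LB \<and> f (LB!s') < r}" "{..s}"] by simp
    moreover have "{s'. s' < length LA \<and> f (LA!s') < r} \<subseteq> {..<s}"
    proof
      fix s' assume "s' \<in> {s'. s' < length LA \<and> f (LA!s') < r}"
      then show "s' \<in> {..<s}"
        using sorted_map_mono[OF sA, of s s'] c unfolding r_def by (cases "s \<le> s'") auto
    qed
    then have "card {s'. s' < length LA \<and> f (LA!s') < r} \<le> s"
      using card_mono[of "{..<s}"] by fastforce
    ultimately show False using cnt[rule_format, of r] by linarith
  qed
qed

lemma gale_iff:
  assumes "finite A" "finite B"
  shows "gale n t A B \<longleftrightarrow> card A = card B \<and>
           (\<forall>r. card {x\<in>B. crank n t x < r} \<le> card {x\<in>A. crank n t x < r})"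
proof -
  define LA where "LA = csorted n t A"
  define LB where "LB = csorted n t B"
  note pA = csorted_props[OF assms(1), of n t, folded LA_def]
  note pB = csorted_props[OF assms(2), of n t, folded LB_def]
  have cA: "card {x\<in>A. crank n t x < r} = card {s. s < length LA \<and> crank n t (LA!s) < r}" for r
    using card_filter_nth[OF pA(2), of "\<lambda>x. crank n t x < r"] pA(1) by simp
  have cB: "card {x\<in>B. crank n t x < r} = card {s. s < length LB \<and> crank n t (LB!s) < r}" for r
    using card_filter_nth[OF pB(2), of "\<lambda>x. crank n t x < r"] pB(1) by simp
  have "gale n t A B \<longleftrightarrow>
          length LA = length LB \<and> (\<forall>s < length LA. crank n t (LA!s) \<le> crank n t (LB!s))"
    by (simp add: gale_def LA_def LB_def cle_def Let_def)
  then show ?thesis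
    using sorted_entrywise_iff_counts[OF pA(3) pB(3)] pA(4) pB(4) unfolding cA cB by auto
qed

lemma card_prefix_suffix:
  fixes f :: "'a \<Rightarrow> nat"
  assumes "finite X"
  shows "card {x\<in>X. f x < r} + card {x\<in>X. r \<le> f x} = card X"
proof -
  have "X = {x\<in>X. f x < r} \<union> {x\<in>X. r \<le> f x}" by (auto simp: not_le)
  moreover have "{x\<in>X. f x < r} \<inter> {x\<in>X. r \<le> f x} = {}" by auto
  ultimately show ?thesis using assms card_Un_disjoint[of "{x\<in>X. f x < r}" "{x\<in>X. r \<le> f x}"]
    by (metis (no_types, lifting) finite_Un)
qed

lemma suffix_bound:
  fixes f :: "'a \<Rightarrow> nat"
  assumes "finite A" "finite H" "card A = card H"
    and "card {x\<in>H. f x < r} \<le> card {x\<in>A. f x < r}"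
  shows "card {x\<in>A. r \<le> f x} \<le> card {x\<in>H. r \<le> f x}"
  using assms card_prefix_suffix[OF assms(1), of f r] card_prefix_suffix[OF assms(2), of f r]
  by linarith

lemma card_disj:
  assumes "finite X" "\<And>x. \<not> (P x \<and> Q x)"
  shows "card {x\<in>X. P x \<or> Q x} = card {x\<in>X. P x} + card {x\<in>X. Q x}"
proof -
  have "{x\<in>X. P x \<or> Q x} = {x\<in>X. P x} \<union> {x\<in>X. Q x}" by auto
  moreover have "{x\<in>X. P x} \<inter> {x\<in>X. Q x} = {}" using assms(2) by auto
  ultimately show ?thesis using assms(1) by (simp add: card_Un_disjoint)
qed

lemma card_exchange:
  assumes "finite A" "m \<in> A" "j \<notin> A"
  shows "card {x\<in>(A - {m}) \<union> {j}. P x} + (if P m then 1 else 0)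
         = card {x\<in>A. P x} + (if P j then 1 else 0)"
proof -
  have mj: "m \<noteq> j" using assms by auto
  have e: "{x\<in>(A - {m}) \<union> {j}. P x} = ({x\<in>A. P x} - {m}) \<union> (if P j then {j} else {})"
    using mj by auto
  have f: "finite {x\<in>A. P x}" using assms by simp
  have g: "P m \<Longrightarrow> card {x\<in>A. P x} > 0" using f assms by (auto simp: card_gt_0_iff)
  show ?thesis
    unfolding e using assms f g
    by (cases "P m"; cases "P j") (auto simp: card_insert_if card_Diff_singleton_if)
qed

section \<open>Walking along a Grassmann necklace\<close>

lemma necklace_subset:
  assumes "grassmann_necklace n I" "s \<in> {1..n}"
  shows "I s \<subseteq> {1..n}" "finite (I s)"
proof -
  show "I s \<subseteq> {1..n}" using assms unfolding grassmann_necklace_def by auto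
  then show "finite (I s)" using finite_subset by blast
qed

lemma necklace_step:
  assumes "grassmann_necklace n I" "s \<in> {1..n}"
  shows "I s - {s} \<subseteq> I (cnext n s)"
  using assms unfolding grassmann_necklace_def by (cases "s \<in> I s") fastforce+

lemma first_switch:
  fixes P :: "nat \<Rightarrow> bool"
  shows "\<not> P p \<Longrightarrow> P q \<Longrightarrow> p \<le> q \<Longrightarrow> \<exists>i. p \<le> i \<and> i < q \<and> \<not> P i \<and> P (Suc i)"
proof (induction q)
  case 0
  then show ?case by auto
next
  case (Suc q)
  show ?case
  proof (cases "P q")
    case True
    then have "p \<le> q" using Suc.prems by (cases "p = Suc q") auto
    then show ?thesis using Suc True by (metis less_Suc_eq)
  next
    case False
    then show ?thesis using Suc by (metis le_SucE less_Suc_eq_le order_refl)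
  qed
qed

lemma walk_mono:
  assumes gn: "grassmann_necklace n I" and u: "u \<in> {1..n}"
    and nq: "\<forall>i. p \<le> i \<and> i < q \<longrightarrow> \<not> Q ((cnext n ^^ i) u)" and pq: "p \<le> q"
  shows "card {x \<in> I ((cnext n ^^ p) u). Q x} \<le> card {x \<in> I ((cnext n ^^ q) u). Q x}"
  using nq pq
proof (induction q)
  case 0
  then show ?case by simp
next
  case (Suc q)
  show ?case
  proof (cases "p = Suc q")
    case True then show ?thesis by simp
  next
    case False
    then have pq': "p \<le> q" using Suc.prems by simp
    have ih: "card {x \<in> I ((cnext n ^^ p) u). Q x} \<le> card {x \<in> I ((cnext n ^^ q) u). Q x}"
      using Suc.IH Suc.prems pq' by auto
    define s where "s = (cnext n ^^ q) u"
    have s: "s \<in> {1..n}" using cnext_iter_in[OF u] s_def by simp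
    have "\<not> Q s" using Suc.prems pq' s_def by auto
    then have "{x \<in> I s. Q x} \<subseteq> {x \<in> I (cnext n s). Q x}"
      using necklace_step[OF gn s] by auto
    then have "card {x \<in> I s. Q x} \<le> card {x \<in> I (cnext n s). Q x}"
      using necklace_subset[OF gn cnext_in[OF s]] by (intro card_mono) auto
    then show ?thesis using ih s_def by simp
  qed
qed

lemma walk_gain:
  assumes gn: "grassmann_necklace n I" and u: "u \<in> {1..n}"
    and nq: "\<forall>i<q. \<not> Q ((cnext n ^^ i) u)" and "Q m"
    and "m \<notin> I ((cnext n ^^ p) u)" "m \<in> I ((cnext n ^^ q) u)" "p \<le> q"
  shows "card {x \<in> I u. Q x} + 1 \<le> card {x \<in> I ((cnext n ^^ q) u). Q x}"
proof -
  obtain i where i: "p \<le> i" "i < q" "m \<notin> I ((cnext n ^^ i) u)" "m \<in> I ((cnext n ^^ Suc i) u)"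
    using first_switch[of "\<lambda>i. m \<in> I ((cnext n ^^ i) u)" p q] assms by auto
  define s where "s = (cnext n ^^ i) u"
  have s: "s \<in> {1..n}" using cnext_iter_in[OF u] s_def by simp
  have before: "card {x \<in> I u. Q x} \<le> card {x \<in> I s. Q x}"
    using walk_mono[OF gn u, of 0 i Q] nq i unfolding s_def by auto
  have after: "card {x \<in> I (cnext n s). Q x} \<le> card {x \<in> I ((cnext n ^^ q) u). Q x}"
    using walk_mono[OF gn u, of "Suc i" q Q] nq i unfolding s_def by auto
  have "insert m {x \<in> I s. Q x} \<subseteq> {x \<in> I (cnext n s). Q x}"
    using necklace_step[OF gn s] nq i \<open>Q m\<close> unfolding s_def by auto
  then have "card (insert m {x \<in> I s. Q x}) \<le> card {x \<in> I (cnext n s). Q x}"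
    using necklace_subset[OF gn cnext_in[OF s]] by (intro card_mono) auto
  then have "card {x \<in> I s. Q x} + 1 \<le> card {x \<in> I (cnext n s). Q x}"
    using i(3) necklace_subset[OF gn s] unfolding s_def by simp
  then show ?thesis using before after by simp
qed

lemma walk_removal:
  assumes gn: "grassmann_necklace n I" and u: "u \<in> {1..n}"
    and "m \<in> I ((cnext n ^^ p) u)" "m \<notin> I ((cnext n ^^ q) u)" "p \<le> q"
  shows "\<exists>i. p \<le> i \<and> i < q \<and> (cnext n ^^ i) u = m"
proof -
  obtain i where i: "p \<le> i" "i < q" "m \<in> I ((cnext n ^^ i) u)" "m \<notin> I ((cnext n ^^ Suc i) u)"
    using first_switch[of "\<lambda>i. m \<notin> I ((cnext n ^^ i) u)" p q] assms by auto
  have "m = (cnext n ^^ i) u"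
    using necklace_step[OF gn cnext_iter_in[OF u, of i]] i(3,4) by auto
  then show ?thesis using i by auto
qed

lemma necklace_difference_before:
  assumes gn: "grassmann_necklace n I" and a: "a \<in> {1..n}" and j: "j \<in> {1..n}"
    and "m \<in> I a" "m \<notin> I j"
  shows "crank n a m < crank n a j"
proof -
  obtain i where i: "i < crank n a j" "(cnext n ^^ i) a = m"
    using walk_removal[OF gn a, of m 0 "crank n a j"] assms cnext_iter_crank[OF a j] by auto
  have "i < n" using i crank_lt[of n a j] a by simp
  then show ?thesis using crank_cnext_iter[OF a] i by auto
qed

lemma cmax_props:
  assumes a: "a \<in> {1..n}" and D: "D \<subseteq> {1..n}" "D \<noteq> {}"
  shows "cmax n a D \<in> D" "\<forall>y\<in>D. crank n a y \<le> crank n a (cmax n a D)"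
proof -
  have fin: "finite D" using D finite_subset by blast
  have "Max (crank n a ` D) \<in> crank n a ` D" using fin D by (intro Max_in) auto
  then obtain x where x: "x \<in> D" "crank n a x = Max (crank n a ` D)" by auto
  have mx: "\<forall>y\<in>D. crank n a y \<le> crank n a x" using x fin by simp
  have "cmax n a D = x"
    unfolding cmax_def cle_def
  proof (rule the_equality)
    show "x \<in> D \<and> (\<forall>y\<in>D. crank n a y \<le> crank n a x)" using x mx by simp
  next
    fix z assume z: "z \<in> D \<and> (\<forall>y\<in>D. crank n a y \<le> crank n a z)"
    then have "crank n a z = crank n a x" using mx x by (meson le_antisym)
    then show "z = x" using crank_inj[OF a] z x D by blast
  qed
  then show "cmax n a D \<in> D" "\<forall>y\<in>D. crank n a y \<le> crank n a (cmax n a D)" using x mx by auto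
qed

lemma positroid_members:
  assumes "positroid_with_necklace n k M I" "H \<in> M"
  shows "H \<subseteq> {1..n}" "card H = k" "finite H"
proof -
  have "M \<subseteq> ksubsets n k" using assms(1) unfolding positroid_with_necklace_def by (elim conjE)
  then show H: "H \<subseteq> {1..n}" "card H = k" using assms(2) unfolding ksubsets_def by auto
  show "finite H" using H(1) finite_subset by blast
qed

lemma positroid_necklace:
  assumes "positroid_with_necklace n k M I"
  shows "grassmann_necklace n I" "\<And>t. t \<in> {1..n} \<Longrightarrow> I t \<in> M"
    "\<And>t H. t \<in> {1..n} \<Longrightarrow> H \<in> M \<Longrightarrow> gale n t (I t) H"
proof -
  show "grassmann_necklace n I" using assms unfolding positroid_with_necklace_def by (elim conjE)
  have "\<forall>t\<in>{1..n}. I t \<in> M \<and> (\<forall>H\<in>M. gale n t (I t) H)"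
    using assms unfolding positroid_with_necklace_def by (elim conjE)
  then show "\<And>t. t \<in> {1..n} \<Longrightarrow> I t \<in> M"
    "\<And>t H. t \<in> {1..n} \<Longrightarrow> H \<in> M \<Longrightarrow> gale n t (I t) H" by blast+
qed

lemma positroid_prefix_bound:
  assumes P: "positroid_with_necklace n k M I" and t: "t \<in> {1..n}" and H: "H \<in> M"
  shows "card {x\<in>H. crank n t x < r} \<le> card {x\<in>I t. crank n t x < r}"
  using positroid_necklace(3)[OF P t H]
    gale_iff[OF positroid_members(3)[OF P positroid_necklace(2)[OF P t]] positroid_members(3)[OF P H]]
  by blast

lemma positroid_memberI:
  assumes P: "positroid_with_necklace n k M I" and K: "K \<subseteq> {1..n}" "card K = k"
    and bound: "\<forall>t\<in>{1..n}. \<forall>r. card {x\<in>K. crank n t x < r} \<le> card {x\<in>I t. crank n t x < r}"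
  shows "K \<in> M"
proof -
  have Meq: "M = {H \<in> ksubsets n k. \<forall>t\<in>{1..n}. gale n t (I t) H}"
    using P unfolding positroid_with_necklace_def by (elim conjE)
  have fK: "finite K" using K(1) finite_subset by blast
  have "gale n t (I t) K" if t: "t \<in> {1..n}" for t
  proof -
    note kt = positroid_members[OF P positroid_necklace(2)[OF P t]]
    show ?thesis unfolding gale_iff[OF kt(3) fK] using kt(2) K(2) bound t by simp
  qed
  moreover have "K \<in> ksubsets n k" using K unfolding ksubsets_def by blast
  ultimately show ?thesis by (subst Meq) blast
qed

lemma neck_perm_moved_in_own:
  assumes "neck_perm n I j \<noteq> j"
  shows "j \<in> I j"
  using assms by (rule contrapos_np) (simp add: neck_perm_def)

section \<open>The exchange \<open>K = I\<^sub>a - {m} \<union> {j}\<close>\<close>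

text \<open>Key estimate for \<open>I\<^sub>t \<le>\<^sub>t K\<close>, first case: for a cut r of \<open>\<le>\<^sub>t\<close> after j but not after m or a,
  T has more elements than A below the cut.  Indeed, elements of A below the cut come after m
  in \<open>\<le>\<^sub>a\<close>, so they lie in B together with j, and T dominates B.\<close>
lemma exchange_gain_early:
  assumes t: "t \<in> {1..n}" and a: "a \<in> {1..n}" and j: "j \<in> {1..n}" and m: "m \<in> {1..n}"
    and A: "A \<subseteq> {1..n}" and fB: "finite B" and jA: "j \<notin> A" and jB: "j \<in> B"
    and F1: "\<forall>y\<in>A. crank n a m < crank n a y \<longrightarrow> y \<in> B"
    and F2: "crank n a m < crank n a j"
    and cut: "crank n t j < r" "r \<le> crank n t m" "r \<le> crank n t a"
    and gTB: "card {x\<in>B. crank n t x < r} \<le> card {x\<in>T. crank n t x < r}"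
  shows "card {x\<in>A. crank n t x < r} + 1 \<le> card {x\<in>T. crank n t x < r}"
proof -
  have n: "1 \<le> n" using t by simp
  have "{x\<in>A. crank n t x < r} \<subseteq> {x\<in>B. crank n t x < r}"
  proof
    fix y assume y: "y \<in> {x\<in>A. crank n t x < r}"
    then have yn: "y \<in> {1..n}" using A by auto
    have "crank n t y < n" "crank n t a < n" "crank n t j < n" "crank n t m < n"
      using crank_lt[OF n] by auto
    then have "crank n a m < crank n a y"
      using crank_shift[OF t a yn] crank_shift[OF t a m] crank_shift[OF t a j] cut F2 y
      by (auto split: if_splits)
    then show "y \<in> {x\<in>B. crank n t x < r}" using F1 y by auto
  qed
  then have "insert j {x\<in>A. crank n t x < r} \<subseteq> {x\<in>B. crank n t x < r}"
    using jB cut by auto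
  then have "card (insert j {x\<in>A. crank n t x < r}) \<le> card {x\<in>B. crank n t x < r}"
    using fB by (intro card_mono) auto
  moreover have "finite A" using A finite_subset by blast
  ultimately show ?thesis using gTB jA by simp
qed

text \<open>The same estimate when the cut lies after \<open>a\<close>: walking the necklace from t to a,
  the element m enters after j is passed, and nothing beyond the cut can leave.\<close>
lemma exchange_gain_late:
  assumes gn: "grassmann_necklace n I"
    and t: "t \<in> {1..n}" and a: "a \<in> {1..n}" and j: "j \<in> {1..n}"
    and mA: "m \<in> I a" and mB: "m \<notin> I j" and aj: "a \<noteq> j"
    and F2: "crank n a m < crank n a j"
    and cut: "crank n t j < r" "r \<le> crank n t m" "crank n t a < r"
    and cAT: "card (I a) = card (I t)"
  shows "card {x\<in>I a. crank n t x < r} + 1 \<le> card {x\<in>I t. crank n t x < r}"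
proof -
  have n: "1 \<le> n" using t by simp
  have m: "m \<in> {1..n}" using mA necklace_subset[OF gn a] by auto
  have "crank n t a \<noteq> crank n t j" using crank_inj[OF t a j] aj by blast
  moreover have "crank n t a < n" "crank n t j < n" "crank n t m < n" using crank_lt[OF n] by auto
  ultimately have ja: "crank n t j < crank n t a"
    using crank_shift[OF t a m] crank_shift[OF t a j] cut F2 by (auto split: if_splits)
  define Q where "Q x \<longleftrightarrow> r \<le> crank n t x" for x
  have "\<forall>i<crank n t a. \<not> Q ((cnext n ^^ i) t)"
    using crank_cnext_iter[OF t] crank_lt[OF n, of t a] cut(3) unfolding Q_def by auto
  moreover have "Q m" using cut(2) unfolding Q_def by simp
  ultimately have "card {x \<in> I t. Q x} + 1 \<le> card {x \<in> I a. Q x}"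
    using walk_gain[of n I t "crank n t a" Q m "crank n t j"] gn t mA mB ja
      cnext_iter_crank[OF t a] cnext_iter_crank[OF t j] by simp
  then show ?thesis
    using card_prefix_suffix[OF necklace_subset(2)[OF gn a], of "crank n t" r]
      card_prefix_suffix[OF necklace_subset(2)[OF gn t], of "crank n t" r] cAT
    unfolding Q_def by linarith
qed

lemma exchange_prefix_upper:
  assumes gn: "grassmann_necklace n I"
    and a: "a \<in> {1..n}" and j: "j \<in> {1..n}" and t: "t \<in> {1..n}"
    and mA: "m \<in> I a" and mB: "m \<notin> I j" and jB: "j \<in> I j" and jA: "j \<notin> I a"
    and F1: "\<forall>y\<in>I a. crank n a m < crank n a y \<longrightarrow> y \<in> I j"
    and F2: "crank n a m < crank n a j"
    and gTA: "card {x\<in>I a. crank n t x < r} \<le> card {x\<in>I t. crank n t x < r}"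
    and gTB: "card {x\<in>I j. crank n t x < r} \<le> card {x\<in>I t. crank n t x < r}"
    and cAT: "card (I a) = card (I t)"
  shows "card {x \<in> (I a - {m}) \<union> {j}. crank n t x < r} \<le> card {x\<in>I t. crank n t x < r}"
proof -
  note fA = necklace_subset[OF gn a]
  note exch = card_exchange[OF fA(2) mA jA, of "\<lambda>x. crank n t x < r"]
  show ?thesis
  proof (cases "crank n t j < r \<and> r \<le> crank n t m")
    case False
    then have "card {x \<in> (I a - {m}) \<union> {j}. crank n t x < r} \<le> card {x\<in>I a. crank n t x < r}"
      using exch by (auto split: if_splits)
    with gTA show ?thesis by (meson le_trans)
  next
    case True
    have "card {x\<in>I a. crank n t x < r} + 1 \<le> card {x\<in>I t. crank n t x < r}"
    proof (cases "r \<le> crank n t a")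
      case True
      then show ?thesis
        using exchange_gain_early[OF t a j _ fA(1) necklace_subset(2)[OF gn j] jA jB F1 F2 _ _ _ gTB]
          \<open>crank n t j < r \<and> r \<le> crank n t m\<close> mA fA(1) by auto
    next
      case False
      have "a \<noteq> j" using jA jB by auto
      then show ?thesis
        using exchange_gain_late[OF gn t a j mA mB _ F2 _ _ _ cAT] True False by simp
    qed
    then show ?thesis using exch True by auto
  qed
qed

text \<open>Let H contain j and dominate A in \<open>\<le>\<^sub>a\<close> and B in \<open>\<le>\<^sub>j\<close>.  For a cut r strictly between m and j
  in \<open>\<le>\<^sub>a\<close>, H has fewer elements than A below the cut: above the cut, A splits into a window
  \<open>[r, j)\<close>, controlled through B since it is a final segment of \<open>\<le>\<^sub>j\<close>, and a part beyond j,
  controlled directly; H has j in addition.\<close>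
lemma exchange_gain_window:
  assumes a: "a \<in> {1..n}" and j: "j \<in> {1..n}"
    and A: "A \<subseteq> {1..n}" and B: "B \<subseteq> {1..n}" and H: "H \<subseteq> {1..n}"
    and jA: "j \<notin> A" and jH: "j \<in> H"
    and F1: "\<forall>y\<in>A. crank n a m < crank n a y \<longrightarrow> y \<in> B"
    and cut: "crank n a m < r" "r \<le> crank n a j"
    and gAH: "\<forall>r. card {x\<in>H. crank n a x < r} \<le> card {x\<in>A. crank n a x < r}"
    and gBH: "\<forall>r. card {x\<in>H. crank n j x < r} \<le> card {x\<in>B. crank n j x < r}"
    and cAH: "card A = card H" and cBH: "card B = card H"
  shows "card {x\<in>H. crank n a x < r} + 1 \<le> card {x\<in>A. crank n a x < r}"
proof -
  have fA: "finite A" and fB: "finite B" and fH: "finite H"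
    using A B H finite_subset by blast+
  define S1 where "S1 x \<longleftrightarrow> r \<le> crank n a x \<and> crank n a x < crank n a j" for x
  define S2 where "S2 x \<longleftrightarrow> crank n a j < crank n a x" for x
  have d12: "\<And>x. \<not> (S1 x \<and> S2 x)" unfolding S1_def S2_def by auto
  have "{x\<in>A. r \<le> crank n a x} = {x\<in>A. S1 x \<or> S2 x}"
  proof -
    have "crank n a x \<noteq> crank n a j" if "x \<in> A" for x
      using crank_inj[OF a _ j] that A jA by blast
    then show ?thesis using cut unfolding S1_def S2_def by force
  qed
  then have above_A: "card {x\<in>A. r \<le> crank n a x} = card {x\<in>A. S1 x} + card {x\<in>A. S2 x}"
    using card_disj[OF fA d12] by simp
  have "insert j {x\<in>H. S1 x \<or> S2 x} \<subseteq> {x\<in>H. r \<le> crank n a x}"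
    using cut jH unfolding S1_def S2_def by auto
  moreover have "j \<notin> {x\<in>H. S1 x \<or> S2 x}" unfolding S1_def S2_def by auto
  ultimately have above_H:
      "card {x\<in>H. S1 x} + card {x\<in>H. S2 x} + 1 \<le> card {x\<in>H. r \<le> crank n a x}"
    using card_disj[OF fH d12] fH
      card_mono[of "{x\<in>H. r \<le> crank n a x}" "insert j {x\<in>H. S1 x \<or> S2 x}"]
    by simp
  have beyond: "card {x\<in>A. S2 x} \<le> card {x\<in>H. S2 x}"
    using suffix_bound[OF fA fH cAH gAH[rule_format, of "Suc (crank n a j)"]]
    unfolding S2_def by (simp add: Suc_le_eq)
  have "{x\<in>A. S1 x} \<subseteq> {x\<in>B. S1 x}" using F1 cut unfolding S1_def by auto
  then have window_AB: "card {x\<in>A. S1 x} \<le> card {x\<in>B. S1 x}"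
    using fB by (intro card_mono) auto
  have window_BH: "card {x\<in>B. S1 x} \<le> card {x\<in>H. S1 x}"
  proof -
    define s where "s = n + r - crank n a j"
    have suffix: "{x\<in>X. S1 x} = {x\<in>X. s \<le> crank n j x}" if "X \<subseteq> {1..n}" for X
      using that crank_window_as_suffix[OF a j] unfolding S1_def s_def by blast
    show ?thesis
      using suffix_bound[OF fB fH cBH gBH[rule_format, of s]] unfolding suffix[OF B] suffix[OF H] .
  qed
  show ?thesis
    using above_A above_H beyond window_AB window_BH cAH
      card_prefix_suffix[OF fA, of "crank n a" r] card_prefix_suffix[OF fH, of "crank n a" r]
    by linarith
qed

lemma exchange_prefix_lower:
  assumes a: "a \<in> {1..n}" and j: "j \<in> {1..n}"
    and A: "A \<subseteq> {1..n}" and B: "B \<subseteq> {1..n}" and H: "H \<subseteq> {1..n}"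
    and mA: "m \<in> A" and jA: "j \<notin> A" and jH: "j \<in> H"
    and F1: "\<forall>y\<in>A. crank n a m < crank n a y \<longrightarrow> y \<in> B"
    and gAH: "\<forall>r. card {x\<in>H. crank n a x < r} \<le> card {x\<in>A. crank n a x < r}"
    and gBH: "\<forall>r. card {x\<in>H. crank n j x < r} \<le> card {x\<in>B. crank n j x < r}"
    and cAH: "card A = card H" and cBH: "card B = card H"
  shows "card {x\<in>H. crank n a x < r} \<le> card {x \<in> (A - {m}) \<union> {j}. crank n a x < r}"
proof -
  have "finite A" using A finite_subset by blast
  note exch = card_exchange[OF this mA jA, of "\<lambda>x. crank n a x < r"]
  show ?thesis
  proof (cases "crank n a m < r \<and> r \<le> crank n a j")
    case False
    then have "card {x\<in>A. crank n a x < r} \<le> card {x \<in> (A - {m}) \<union> {j}. crank n a x < r}"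
      using exch by (auto split: if_splits)
    with gAH show ?thesis by (meson le_trans)
  next
    case True
    then have "card {x\<in>H. crank n a x < r} + 1 \<le> card {x\<in>A. crank n a x < r}"
      using exchange_gain_window[OF a j A B H jA jH F1 _ _ gAH gBH cAH cBH] by blast
    then show ?thesis using exch True by simp
  qed
qed

lemma exchange_element:
  assumes P: "positroid_with_necklace n k M I" and a: "a \<in> {1..n}" and j: "j \<in> {1..n}"
    and jB: "j \<in> I j" and jA: "j \<notin> I a"
  defines "m \<equiv> cmax n a (I a - I j)"
  shows "m \<in> I a" "m \<notin> I j" "\<forall>y\<in>I a. crank n a m < crank n a y \<longrightarrow> y \<in> I j"
    "crank n a m < crank n a j"
proof -
  note kA = positroid_members[OF P positroid_necklace(2)[OF P a]]
  note kB = positroid_members[OF P positroid_necklace(2)[OF P j]]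
  have "I a - I j \<noteq> {}"
  proof
    assume "I a - I j = {}"
    then have "I a = I j" using card_subset_eq[OF kB(3)] kA kB by auto
    then show False using jA jB by simp
  qed
  moreover have "I a - I j \<subseteq> {1..n}" using kA by auto
  ultimately have m: "m \<in> I a - I j" "\<forall>y\<in>I a - I j. crank n a y \<le> crank n a m"
    using cmax_props[OF a] unfolding m_def by auto
  then show "m \<in> I a" "m \<notin> I j" "\<forall>y\<in>I a. crank n a m < crank n a y \<longrightarrow> y \<in> I j"
    by (auto simp: not_le[symmetric])
  show "crank n a m < crank n a j"
    using necklace_difference_before[OF positroid_necklace(1)[OF P] a j] m(1) by auto
qed

lemma exchange_in_positroid:
  assumes P: "positroid_with_necklace n k M I" and a: "a \<in> {1..n}" and j: "j \<in> {1..n}"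
    and jB: "j \<in> I j" and jA: "j \<notin> I a"
  shows "(I a - {cmax n a (I a - I j)}) \<union> {j} \<in> M"
proof -
  define m where "m = cmax n a (I a - I j)"
  note m = exchange_element[OF P a j jB jA, folded m_def]
  note kA = positroid_members[OF P positroid_necklace(2)[OF P a]]
  have "0 < card (I a)" using m(1) kA(3) card_gt_0_iff by blast
  then have "card ((I a - {m}) \<union> {j}) = k"
    using m(1) kA jA by (simp add: card_Diff_singleton)
  moreover have "(I a - {m}) \<union> {j} \<subseteq> {1..n}" using kA j by auto
  moreover have "card {x \<in> (I a - {m}) \<union> {j}. crank n t x < r} \<le> card {x\<in>I t. crank n t x < r}"
    if t: "t \<in> {1..n}" for t r
  proof -
    have M: "I a \<in> M" "I j \<in> M" "I t \<in> M" using positroid_necklace(2)[OF P] a j t by auto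
    show ?thesis
      using exchange_prefix_upper[OF positroid_necklace(1)[OF P] a j t m(1,2) jB jA m(3,4)
          positroid_prefix_bound[OF P t M(1)] positroid_prefix_bound[OF P t M(2)]]
        positroid_members(2)[OF P M(1)] positroid_members(2)[OF P M(3)] by simp
  qed
  ultimately show ?thesis unfolding m_def by (intro positroid_memberI[OF P]) auto
qed

lemma exchange_below_members:
  assumes P: "positroid_with_necklace n k M I" and a: "a \<in> {1..n}" and j: "j \<in> {1..n}"
    and jB: "j \<in> I j" and jA: "j \<notin> I a" and H: "H \<in> M" "j \<in> H"
  shows "gale n a ((I a - {cmax n a (I a - I j)}) \<union> {j}) H"
proof -
  define m where "m = cmax n a (I a - I j)"
  note m = exchange_element[OF P a j jB jA, folded m_def]
  note kA = positroid_members[OF P positroid_necklace(2)[OF P a]]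
  note kB = positroid_members[OF P positroid_necklace(2)[OF P j]]
  note kH = positroid_members[OF P H(1)]
  have "0 < card (I a)" using m(1) kA(3) card_gt_0_iff by blast
  then have "card ((I a - {m}) \<union> {j}) = card H"
    using m(1) kA kH jA by (simp add: card_Diff_singleton)
  moreover have "card {x\<in>H. crank n a x < r} \<le> card {x \<in> (I a - {m}) \<union> {j}. crank n a x < r}" for r
    using exchange_prefix_lower[OF a j kA(1) kB(1) kH(1) m(1) jA H(2) m(3)]
      positroid_prefix_bound[OF P a H(1)] positroid_prefix_bound[OF P j H(1)] kA kB kH by simp
  ultimately show ?thesis unfolding m_def using gale_iff kA(3) kH(3) by auto
qed

theorem mainTheorem2:
  fixes n k j :: nat and M :: "nat set set" and I :: "nat \<Rightarrow> nat set"
  assumes "1 \<le> n"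
    and "positroid_with_necklace n k M I"
    and "j \<in> {1..n}"
    and "neck_perm n I j \<noteq> j"
  shows "\<forall>a\<in>{1..n}.
           gale_min n a {H \<in> M. j \<in> H}
             (if j \<in> I a then I a
              else (I a - {cmax n a (I a - I j)}) \<union> {j})"
proof
  fix a assume a: "a \<in> {1..n}"
  have jB: "j \<in> I j" using assms(4) by (rule neck_perm_moved_in_own)
  show "gale_min n a {H \<in> M. j \<in> H}
          (if j \<in> I a then I a else (I a - {cmax n a (I a - I j)}) \<union> {j})"
  proof (cases "j \<in> I a")
    case True
    then show ?thesis
      using positroid_necklace(2,3)[OF assms(2) a] unfolding gale_min_def by simp
  next
    case False
    then show ?thesis
      using exchange_in_positroid[OF assms(2) a assms(3) jB False]
        exchange_below_members[OF assms(2) a assms(3) jB False]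
      unfolding gale_min_def by simp
  qed
qed

end
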